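(* Let $\Sigma$ and $\Gamma$ be finite alphabets, each with at least two letters, let $a,b\in\Sigma$ be distinct letters, and let $w \in \{a,b\}^+$. The following are equivalent: 1. $\mathrm{E}_{\mathcal{I}}(w) = \infty$. 2. $\mathrm{E}_{\mathcal{I}}(w) > |w|$. 3. There exist integers $k, j_1, j_2, j_3 \ge 0$ such that $w = b^{j_1} (a b^{j_2})^k a b^{j_3}$ or $w = a^{j_1} (b a^{j_2})^k b a^{j_3}$.
   Context: For a nonempty word $v$ and integer $p\ge 0$, $v^{p/|v|}$ denotes the prefix of length $p$ of $vvv\cdots$. For a nonempty finite word $u$, $\mathrm{E}(u) = \sup\{ r \in \mathbb{Q} : u = v^r \text{ for some nonempty word } v\}$. $\mathcal{I}$ is the set of injective morphisms $\Sigma^* \to \Gamma^*$, and $\mathrm{E}_{\mathcal{I}}(w) = \sup\{\mathrm{E}(h(w)) : h \in \mathcal{I}\}$. *)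

theory Defs
  imports Complex_Main "HOL-Library.Extended_Real"
begin

text \<open>Finite words are lists. For a nonempty word v and p \<ge> 0,
  wpow v p is the prefix of length p of vvv..., i.e. v^(p/|v|).\<close>
definition wpow :: "'a list \<Rightarrow> nat \<Rightarrow> 'a list" where
  "wpow v p = map (\<lambda>i. v ! (i mod length v)) [0..<p]"

definition word_exp :: "'a list \<Rightarrow> ereal" where
  "word_exp u = Sup {ereal (real_of_rat r) | r v p.
       v \<noteq> [] \<and> r = of_nat p / of_nat (length v) \<and> u = wpow v p}"

definition morph :: "('a \<Rightarrow> 'b list) \<Rightarrow> 'a list \<Rightarrow> 'b list" where
  "morph f w = concat (map f w)"

definition inj_morphs :: "('a \<Rightarrow> 'b list) set" where
  "inj_morphs = {f. inj (morph f)}"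

definition exp_I :: "('a \<Rightarrow> 'b list) set \<Rightarrow> 'a list \<Rightarrow> ereal" where
  "exp_I I w = (SUP f\<in>I. word_exp (morph f w))"

end

theory Submission
  imports Defs
begin

(* If w = b^j1 (a b^j2)^k a b^j3, send b to a letter z0 and a to a long word
   chosen so that h(w) is a prefix of a high power of t = z0^(j1+j3) z1 z0^j2; every other
   letter goes to z0^j3 z1 z0^n z1 with pairwise distinct n.  Conjugated by z0^j3 these
   images form a prefix code, so h is injective, and E(h(w)) is unbounded.

   Conversely, let h be injective and h(w) = v^r with r > |w|.  Extend h(w) to the infinite
   periodic sequence F and let q be its least period, so that the periods of F are exactly
   the multiples of q.  As |h(w)| > |w| |v| >= |w| q, some letter c has |h(c)| >= q, hence
   every occurrence of h(c) in F determines its position modulo q.  If w has factors c d^g c and c d^g' c with g < g', then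
   q divides |h(c)| + g |h(d)| and |h(c)| + g' |h(d)|; so the block h(d)^g' contains the
   period (g' - g) |h(d)|, which forces q to divide |h(d)| and then |h(c)|.  Now h(c) h(d) and
   h(d) h(c) occur at the same position, so they are equal, contradicting injectivity.
   Words in which any two gaps between consecutive c's have the same length are exactly the
   words of the stated shape. *)

section \<open>Morphisms and codes\<close>

lemma morph_Nil [simp]: "morph f [] = []"
  by (simp add: morph_def)

lemma morph_Cons [simp]: "morph f (x # xs) = f x @ morph f xs"
  by (simp add: morph_def)

lemma morph_append [simp]: "morph f (xs @ ys) = morph f xs @ morph f ys"
  by (simp add: morph_def)

lemma morph_replicate [simp]: "morph f (replicate n x) = concat (replicate n (f x))"
  by (induction n) auto

lemma morph_concat_replicate [simp]:
  "morph f (concat (replicate n xs)) = concat (replicate n (morph f xs))"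
  by (induction n) auto

lemma length_morph_le:
  "(\<And>x. x \<in> set xs \<Longrightarrow> length (f x) \<le> B) \<Longrightarrow> length (morph f xs) \<le> length xs * B"
  by (induction xs) (auto simp: add_mono)

lemma inj_morph_nonerasing:
  assumes "inj (morph f)"
  shows "f x \<noteq> []"
proof
  assume "f x = []"
  then have "morph f [x] = morph f []" by simp
  then show False using injD[OF assms] by blast
qed

lemma inj_morph_prefix_code:
  assumes nonempty: "\<And>x. f x \<noteq> []"
    and distinguished: "\<And>x y. x \<noteq> y \<Longrightarrow>
      \<exists>i < length (f x). i < length (f y) \<and> f x ! i \<noteq> f y ! i"
  shows "inj (morph f)"
proof (rule injI)
  fix xs ys :: "'a list"
  assume "morph f xs = morph f ys"
  then show "xs = ys"
  proof (induction xs arbitrary: ys)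
    case Nil
    then show ?case using nonempty by (cases ys) auto
  next
    case (Cons x xs)
    then obtain y ys' where ys: "ys = y # ys'"
      using nonempty by (cases ys) auto
    have eq: "f x @ morph f xs = f y @ morph f ys'"
      using Cons.prems ys by simp
    have "x = y"
    proof (rule ccontr)
      assume "x \<noteq> y"
      then obtain i where "i < length (f x)" "i < length (f y)" "f x ! i \<noteq> f y ! i"
        using distinguished by blast
      then show False
        using arg_cong[OF eq, of "\<lambda>u. u ! i"] by (simp add: nth_append)
    qed
    then show ?case using eq Cons.IH ys by simp
  qed
qed

lemma inj_morph_conjugate:
  fixes f g :: "'a \<Rightarrow> 'b list"
  assumes "inj (morph g)" and "\<And>x. f x @ z = z @ g x"
  shows "inj (morph f)"
proof (rule injI)
  have conj: "morph f xs @ z = z @ morph g xs" for xs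
    by (induction xs) (simp_all, metis append.assoc assms(2))
  fix xs ys
  assume "morph f xs = morph f ys"
  then have "z @ morph g xs = z @ morph g ys" by (metis conj)
  then show "xs = ys" using injD[OF assms(1)] by simp
qed

lemma inj_morph_marker_code:
  fixes f :: "'a \<Rightarrow> 'b list"
  assumes "z0 \<noteq> z1" and "f b = [z0]" and "inj_on M (- {b})"
    and "\<And>x. x \<noteq> b \<Longrightarrow> \<exists>r. f x = replicate j z0 @ z1 # replicate (M x) z0 @ z1 # r"
  shows "inj (morph f)"
proof -
  obtain r where r: "\<And>x. x \<noteq> b \<Longrightarrow> f x = replicate j z0 @ z1 # replicate (M x) z0 @ z1 # r x"
    using assms(4) by metis
  define g where "g x = (if x = b then [z0] else z1 # replicate (M x) z0 @ z1 # r x @ replicate j z0)"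
    for x
  have "inj (morph g)"
  proof (rule inj_morph_prefix_code)
    show "g x \<noteq> []" for x
      by (simp add: g_def)
    have separated: "\<exists>i < length (g x). i < length (g y) \<and> g x ! i \<noteq> g y ! i"
      if "x \<noteq> b" "y \<noteq> b" "M x < M y" for x y
      using that assms(1) by (intro exI[of _ "Suc (M x)"]) (simp add: g_def nth_append)
    fix x y :: 'a
    assume "x \<noteq> y"
    show "\<exists>i < length (g x). i < length (g y) \<and> g x ! i \<noteq> g y ! i"
    proof (cases "x = b \<or> y = b")
      case True
      then show ?thesis
        using \<open>x \<noteq> y\<close> assms(1) by (intro exI[of _ 0]) (auto simp: g_def)
    next
      case False
      then have "M x \<noteq> M y"
        using \<open>x \<noteq> y\<close> assms(3) by (auto dest: inj_onD)
      then show ?thesis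
        using separated[of x y] separated[of y x] False by (metis linorder_neqE_nat)
    qed
  qed
  moreover have "f x @ replicate j z0 = replicate j z0 @ g x" for x
    by (cases "x = b") (simp_all add: g_def assms(2) r replicate_append_same)
  ultimately show ?thesis
    by (rule inj_morph_conjugate)
qed

lemma inj_morph_with_marked_image:
  fixes a b :: "'a::finite" and u :: "'b list"
  assumes "a \<noteq> b" and "z0 \<noteq> z1" and "u = replicate j z0 @ z1 # replicate L z0 @ z1 # r"
  obtains f :: "'a \<Rightarrow> 'b list" where "inj (morph f)" and "f a = u" and "f b = [z0]"
proof -
  obtain idx :: "'a \<Rightarrow> nat" where "inj idx"
    using finite_imp_inj_to_nat_seg[OF finite_UNIV] by blast
  define M where "M x = (if x = a then L else L + 1 + idx x)" for x
  define f where "f x = (if x = b then [z0] else if x = a then u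
      else replicate j z0 @ z1 # replicate (M x) z0 @ [z1])" for x
  have "inj (morph f)"
  proof (rule inj_morph_marker_code[of z0 z1 f b M j])
    show "inj_on M (- {b})"
      using \<open>inj idx\<close> by (auto simp: M_def inj_on_def dest: injD)
    show "\<exists>r. f x = replicate j z0 @ z1 # replicate (M x) z0 @ z1 # r" if "x \<noteq> b" for x
      using that assms(1,3) by (simp add: f_def M_def)
  qed (simp_all add: f_def assms(2))
  moreover have "f a = u" and "f b = [z0]"
    using assms(1) by (simp_all add: f_def)
  ultimately show thesis
    using that by blast
qed

section \<open>Powers of words and the exponent\<close>

lemma length_concat_replicate [simp]: "length (concat (replicate n xs)) = n * length xs"
  by (simp add: length_concat sum_list_replicate)

lemma nth_concat_replicate:
  "i < n * length xs \<Longrightarrow> concat (replicate n xs) ! i = xs ! (i mod length xs)"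
proof (induction n arbitrary: i)
  case (Suc n)
  then show ?case
    by (cases "i < length xs") (auto simp: nth_append le_mod_geq)
qed simp

lemma concat_replicate_mult:
  "concat (replicate (m * n) xs) = concat (replicate m (concat (replicate n xs)))"
  by (induction m) (simp_all add: replicate_add)

lemma concat_replicate_append_self: "concat (replicate n xs) @ xs = xs @ concat (replicate n xs)"
  by (induction n) simp_all

lemma replicate_append_commute: "replicate m x @ replicate n x = replicate n x @ replicate m x"
  by (simp flip: replicate_add add: add.commute)

lemma concat_replicate_rotate:
  "x @ u = v @ x \<Longrightarrow> x @ concat (replicate n u) = concat (replicate n v) @ x"
  by (induction n) (simp_all, metis append.assoc)

lemma wpow_prefix_concat_replicate:
  assumes "xs \<noteq> []" and "u @ r = concat (replicate n xs)"
  shows "wpow xs (length u) = u"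
proof (rule nth_equalityI)
  fix i
  assume "i < length (wpow xs (length u))"
  then have i: "i < length u"
    by (simp add: wpow_def)
  then have "u ! i = concat (replicate n xs) ! i"
    by (metis assms(2) nth_append)
  also have "\<dots> = xs ! (i mod length xs)"
    using i arg_cong[OF assms(2), of length] by (intro nth_concat_replicate) simp
  finally show "wpow xs (length u) ! i = u ! i"
    using i by (simp add: wpow_def)
qed (simp add: wpow_def)

lemma word_exp_ge:
  assumes "v \<noteq> []" and "wpow v (length u) = u"
  shows "ereal (real (length u) / real (length v)) \<le> word_exp u"
proof -
  let ?r = "of_nat (length u) / of_nat (length v) :: rat"
  have "ereal (real_of_rat ?r) \<le> word_exp u"
    unfolding word_exp_def
    by (rule Sup_upper, rule CollectI, intro exI conjI) (use assms in auto)
  then show ?thesis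
    by (simp add: of_rat_divide)
qed

lemma word_exp_ge_if_prefix_of_power:
  assumes "u @ r = concat (replicate n v)" and "v \<noteq> []" and "m * length v \<le> length u"
  shows "ereal (real m) \<le> word_exp u"
proof -
  have "real m * real (length v) \<le> real (length u)"
    using assms(3) by (metis of_nat_le_iff of_nat_mult)
  then have "real m \<le> real (length u) / real (length v)"
    using assms(2) by (simp add: le_divide_eq)
  also have "ereal \<dots> \<le> word_exp u"
    by (rule word_exp_ge[OF assms(2) wpow_prefix_concat_replicate[OF assms(2,1)]])
  finally show ?thesis
    by simp
qed

section \<open>Periodic sequences and occurrences\<close>

definition has_period :: "(nat \<Rightarrow> 'a) \<Rightarrow> nat \<Rightarrow> bool" where
  "has_period F e \<longleftrightarrow> (\<forall>x. F (x + e) = F x)"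

definition least_period :: "(nat \<Rightarrow> 'a) \<Rightarrow> nat \<Rightarrow> bool" where
  "least_period F q \<longleftrightarrow> 0 < q \<and> (\<forall>e. has_period F e \<longleftrightarrow> q dvd e)"

lemma has_period_add_mult:
  assumes "has_period F e"
  shows "F (x + e * m) = F x"
proof (induction m)
  case (Suc m)
  have "F (x + e * Suc m) = F (x + e * m + e)"
    by (simp add: add_ac)
  then show ?case
    using Suc assms by (simp add: has_period_def)
qed simp

lemma has_period_mult: "has_period F e \<Longrightarrow> has_period F (e * m)"
  by (simp add: has_period_def has_period_add_mult)

lemma has_period_mod_eq:
  assumes "has_period F e" and "x mod e = y mod e"
  shows "F x = F y"
  by (metis assms has_period_add_mult mod_mult_div_eq)

lemma has_period_gcd:
  assumes "has_period F e" and "has_period F e'"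
  shows "has_period F (gcd e e')"
proof (cases "e = 0")
  case True
  then show ?thesis
    using assms(2) by simp
next
  case False
  then obtain X Y where XY: "e * X = e' * Y + gcd e e'"
    using bezout_nat by blast
  show ?thesis
    unfolding has_period_def
  proof
    fix x
    have "F (x + gcd e e') = F (x + gcd e e' + e' * Y)"
      using has_period_add_mult[OF assms(2)] by simp
    also have "\<dots> = F (x + e * X)"
      by (simp add: XY add_ac)
    also have "\<dots> = F x"
      using has_period_add_mult[OF assms(1)] by simp
    finally show "F (x + gcd e e') = F x" .
  qed
qed

lemma least_period_exists:
  assumes "has_period F p" and "0 < p"
  obtains q where "least_period F q" and "q \<le> p"
proof -
  define q where "q = (LEAST q. 0 < q \<and> has_period F q)"
  have q: "0 < q" "has_period F q"
    using LeastI[of "\<lambda>q. 0 < q \<and> has_period F q", OF conjI[OF assms(2,1)]]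
    by (simp_all add: q_def)
  have least: "q \<le> r" if "0 < r" "has_period F r" for r
    unfolding q_def using that by (intro Least_le) simp
  have "q dvd e" if "has_period F e" for e
  proof (cases "e = 0")
    case False
    then have "q \<le> gcd e q"
      using has_period_gcd[OF that q(2)] by (intro least) simp_all
    then have "gcd e q = q"
      using q(1) by (simp add: antisym gcd_le2_nat)
    then show ?thesis
      by (metis gcd_dvd1)
  qed simp
  then have "least_period F q"
    using q has_period_mult by (auto simp: least_period_def elim!: dvdE)
  then show thesis
    using that least[OF assms(2,1)] by blast
qed

lemma has_period_from_shift:
  assumes "has_period F q" and "0 < q" and "\<And>x. F (s + x + e) = F (s + x)"
  shows "has_period F e"
  unfolding has_period_def
proof
  fix x
  have s: "s \<le> x + q * s"
    using assms(2) by (cases q) simp_all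
  have "F (x + e) = F (x + e + q * s)"
    using has_period_add_mult[OF assms(1)] by simp
  also have "\<dots> = F (s + (x + q * s - s) + e)"
    using s by (simp add: add_ac)
  also have "\<dots> = F (x + q * s)"
    using assms(3)[of "x + q * s - s"] s by simp
  also have "\<dots> = F x"
    using has_period_add_mult[OF assms(1)] by simp
  finally show "F (x + e) = F x" .
qed

definition occurs_at :: "(nat \<Rightarrow> 'a) \<Rightarrow> 'a list \<Rightarrow> nat \<Rightarrow> bool" where
  "occurs_at F u i \<longleftrightarrow> (\<forall>j < length u. u ! j = F (i + j))"

lemma occurs_at_append [simp]:
  "occurs_at F (u @ v) i \<longleftrightarrow> occurs_at F u i \<and> occurs_at F v (i + length u)"
proof
  assume uv: "occurs_at F (u @ v) i"
  show "occurs_at F u i \<and> occurs_at F v (i + length u)"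
    unfolding occurs_at_def
  proof (intro conjI allI impI)
    fix j
    assume "j < length u"
    then show "u ! j = F (i + j)"
      using uv[unfolded occurs_at_def, rule_format, of j] by (simp add: nth_append)
  next
    fix j
    assume "j < length v"
    then show "v ! j = F (i + length u + j)"
      using uv[unfolded occurs_at_def, rule_format, of "length u + j"] by (simp add: add.assoc)
  qed
next
  assume "occurs_at F u i \<and> occurs_at F v (i + length u)"
  then have u: "\<And>j. j < length u \<Longrightarrow> u ! j = F (i + j)"
    and v: "\<And>j. j < length v \<Longrightarrow> v ! j = F (i + length u + j)"
    by (simp_all add: occurs_at_def)
  show "occurs_at F (u @ v) i"
    unfolding occurs_at_def
  proof (intro allI impI)
    fix j
    assume "j < length (u @ v)"
    then show "(u @ v) ! j = F (i + j)"
      using u[of j] v[of "j - length u"] by (simp add: nth_append)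
  qed
qed

lemma occurs_at_unique:
  "occurs_at F u i \<Longrightarrow> occurs_at F v i \<Longrightarrow> length u = length v \<Longrightarrow> u = v"
  by (simp add: occurs_at_def nth_equalityI)

lemma occurs_at_add_period:
  assumes "has_period F e"
  shows "occurs_at F u (i + e) \<longleftrightarrow> occurs_at F u i"
proof -
  have "F (i + e + j) = F (i + j)" for j
    using assms unfolding has_period_def by (metis add.commute add.left_commute)
  then show ?thesis
    by (simp add: occurs_at_def)
qed

lemma least_period_dvd_occurrence_shift:
  assumes "least_period F q" and "q \<le> length u"
    and "occurs_at F u i" and "occurs_at F u (i + e)"
  shows "q dvd e"
proof -
  have per: "has_period F q" and "0 < q"
    using assms(1) by (auto simp: least_period_def)
  have "F (i + x + e) = F (i + x)" for x
  proof -
    have "x mod q < length u"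
      using \<open>0 < q\<close> assms(2) by (meson mod_less_divisor order_less_le_trans)
    then have "F (i + e + x mod q) = F (i + x mod q)"
      using assms(3,4) by (simp add: occurs_at_def)
    moreover have "F (i + x + e) = F (i + e + x mod q)"
      by (rule has_period_mod_eq[OF per]) (simp only: mod_add_right_eq, simp add: add_ac)
    moreover have "F (i + x) = F (i + x mod q)"
      by (rule has_period_mod_eq[OF per]) (simp add: mod_add_right_eq)
    ultimately show ?thesis
      by simp
  qed
  then have "has_period F e"
    by (rule has_period_from_shift[OF per \<open>0 < q\<close>])
  then show ?thesis
    using assms(1) by (simp add: least_period_def)
qed

lemma has_period_from_power_occurrence:
  assumes "has_period F D" and "0 < D" and "D \<le> n * length v" and "length v dvd D"
    and "occurs_at F (concat (replicate n v)) s"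
  shows "has_period F (length v)"
proof -
  have F: "F (s + x) = v ! (x mod length v)" for x
  proof -
    have x: "x mod D < n * length v"
      using assms(2,3) by (meson mod_less_divisor order_less_le_trans)
    have "F (s + x) = F (s + x mod D)"
      using has_period_mod_eq[OF assms(1)] by (metis mod_add_right_eq)
    also have "\<dots> = concat (replicate n v) ! (x mod D)"
      using assms(5) x by (simp add: occurs_at_def)
    also have "\<dots> = v ! (x mod D mod length v)"
      using x by (rule nth_concat_replicate)
    also have "x mod D mod length v = x mod length v"
      using assms(4) by (rule mod_mod_cancel)
    finally show ?thesis .
  qed
  have "F (s + x + length v) = F (s + x)" for x
    using F[of x] F[of "x + length v"] by (simp add: add.assoc)
  then show ?thesis
    by (rule has_period_from_shift[OF assms(1,2)])
qed

lemma commute_if_occurs_with_unequal_gaps: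
  assumes lp: "least_period F q" and long: "q \<le> length \<alpha>" and "\<beta> \<noteq> []" and "g < g'"
    and occ: "occurs_at F (\<alpha> @ concat (replicate g \<beta>) @ \<alpha>) i"
    and occ': "occurs_at F (\<alpha> @ concat (replicate g' \<beta>) @ \<alpha>) i'"
  shows "\<alpha> @ \<beta> = \<beta> @ \<alpha>"
proof -
  have per: "has_period F e" if "q dvd e" for e
    using lp that by (simp add: least_period_def)
  have "q dvd length \<alpha> + g * length \<beta>"
    using occ by (intro least_period_dvd_occurrence_shift[OF lp long, of i]) (simp_all add: add.assoc)
  moreover have "q dvd length \<alpha> + g' * length \<beta>"
    using occ' by (intro least_period_dvd_occurrence_shift[OF lp long, of i']) (simp_all add: add.assoc)
  ultimately have "q dvd (g' - g) * length \<beta>"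
    by (metis dvd_diff_nat diff_mult_distrib add_diff_cancel_left)
  moreover have "occurs_at F (concat (replicate g' \<beta>)) (i' + length \<alpha>)"
    using occ' by simp
  ultimately have "has_period F (length \<beta>)"
    using \<open>g < g'\<close> \<open>\<beta> \<noteq> []\<close>
    by (intro has_period_from_power_occurrence[of F "(g' - g) * length \<beta>" g'])
      (simp_all add: per diff_mult_distrib)
  then have "q dvd length \<beta>"
    using lp by (simp add: least_period_def)
  then have "q dvd length \<alpha>"
    using \<open>q dvd length \<alpha> + g * length \<beta>\<close> by (simp add: dvd_add_left_iff)
  have "occurs_at F \<alpha> i'"
    using occ' by simp
  moreover have "occurs_at F \<beta> (i' + length \<alpha>)"
    using occ' \<open>g < g'\<close> by (cases g') simp_all
  ultimately have "occurs_at F (\<alpha> @ \<beta>) i'" and "occurs_at F (\<beta> @ \<alpha>) i'"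
    using occurs_at_add_period[OF per] \<open>q dvd length \<alpha>\<close> \<open>q dvd length \<beta>\<close> by simp_all
  then show ?thesis
    by (simp add: occurs_at_unique)
qed

section \<open>Gaps between consecutive occurrences of a letter\<close>

definition equal_gaps :: "'a \<Rightarrow> 'a \<Rightarrow> 'a list \<Rightarrow> bool" where
  "equal_gaps c d w \<longleftrightarrow> (\<forall>p g s p' g' s'.
     w = p @ c # replicate g d @ c # s \<longrightarrow> w = p' @ c # replicate g' d @ c # s' \<longrightarrow> g = g')"

definition uniform_gaps :: "'a \<Rightarrow> 'a \<Rightarrow> 'a list \<Rightarrow> bool" where
  "uniform_gaps c d w \<longleftrightarrow> (\<exists>k j1 j2 j3.
     w = replicate j1 d @ concat (replicate k (c # replicate j2 d)) @ c # replicate j3 d)"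

lemma inj_morph_equal_gaps:
  fixes h :: "'a \<Rightarrow> 'b list"
  assumes lp: "least_period F q" and occ: "occurs_at F (morph h w) 0"
    and inj: "inj (morph h)" and "c \<noteq> d" and long: "q \<le> length (h c)"
  shows "equal_gaps c d w"
proof -
  have "\<not> g < g'"
    if "w = p @ c # replicate g d @ c # s" and "w = p' @ c # replicate g' d @ c # s'"
    for p g s p' g' s'
  proof
    assume "g < g'"
    have "occurs_at F (h c @ concat (replicate g (h d)) @ h c) (length (morph h p))"
      using occ unfolding that(1) by (simp add: add.assoc)
    moreover have "occurs_at F (h c @ concat (replicate g' (h d)) @ h c) (length (morph h p'))"
      using occ unfolding that(2) by (simp add: add.assoc)
    ultimately
    have "morph h [c, d] = morph h [d, c]"
      using commute_if_occurs_with_unequal_gaps[OF lp long inj_morph_nonerasing[OF inj] \<open>g < g'\<close>]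
      by simp
    then show False
      using injD[OF inj] \<open>c \<noteq> d\<close> by fastforce
  qed
  then show ?thesis
    unfolding equal_gaps_def by (metis linorder_neqE_nat)
qed

lemma equal_gaps_Cons: "equal_gaps c d (x # w) \<Longrightarrow> equal_gaps c d w"
  unfolding equal_gaps_def by (metis append_Cons)

lemma uniform_gaps_marker: "uniform_gaps c d (c # replicate n d)"
  unfolding uniform_gaps_def
  by (rule exI[of _ 0], rule exI[of _ 0], rule exI[of _ 0], rule exI[of _ n]) simp

lemma uniform_gaps_Cons_gap: "uniform_gaps c d w \<Longrightarrow> uniform_gaps c d (d # w)"
  unfolding uniform_gaps_def by (metis append_Cons replicate_Suc)

lemma uniform_gaps_Cons_marker:
  assumes "uniform_gaps c d w" and "equal_gaps c d (c # w)"
  shows "uniform_gaps c d (c # w)"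
proof -
  obtain k j1 j2 j3 where w:
    "w = replicate j1 d @ concat (replicate k (c # replicate j2 d)) @ c # replicate j3 d"
    using assms(1) unfolding uniform_gaps_def by blast
  have "c # w = replicate 0 d @ concat (replicate (Suc k) (c # replicate j1 d)) @ c # replicate j3 d"
  proof (cases k)
    case 0
    then show ?thesis
      using w by simp
  next
    case (Suc k')
    obtain r where r: "concat (replicate k' (c # replicate j2 d)) @ c # replicate j3 d = c # r"
      by (cases k') auto
    have "c # w = [] @ c # replicate j1 d @ c # (replicate j2 d @ c # r)"
      and "c # w = (c # replicate j1 d) @ c # replicate j2 d @ c # r"
      using w Suc r by simp_all
    then have "j1 = j2"
      using assms(2) unfolding equal_gaps_def by blast
    then show ?thesis
      using w Suc by simp
  qed
  then show ?thesis
    unfolding uniform_gaps_def by blast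
qed

lemma uniform_gaps_if_equal_gaps:
  assumes "set w \<subseteq> {c, d}" and "c \<in> set w" and "equal_gaps c d w"
  shows "uniform_gaps c d w"
  using assms
proof (induction w)
  case (Cons x w)
  show ?case
  proof (cases "c \<in> set w")
    case True
    have "equal_gaps c d w"
      using Cons.prems(3) by (rule equal_gaps_Cons)
    then have "uniform_gaps c d w"
      using Cons.IH Cons.prems(1) True by simp
    moreover have "x = c \<or> x = d"
      using Cons.prems(1) by auto
    ultimately show ?thesis
      using Cons.prems(3) by (auto intro: uniform_gaps_Cons_gap uniform_gaps_Cons_marker)
  next
    case False
    then have "x = c" and "replicate (length w) d = w"
      using Cons.prems(1,2) by (auto intro: replicate_length_same)
    then show ?thesis
      using uniform_gaps_marker[of c d "length w"] by simp
  qed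
qed simp

lemma uniform_gaps_or_swapped_if_equal_gaps:
  assumes "set w \<subseteq> {c, d}" and "w \<noteq> []" and "equal_gaps c d w"
  shows "uniform_gaps c d w \<or> uniform_gaps d c w"
proof (cases "c \<in> set w")
  case True
  then show ?thesis
    using uniform_gaps_if_equal_gaps[OF assms(1) True assms(3)] by blast
next
  case False
  then have "\<forall>y \<in> set w. y = d"
    using assms(1) by auto
  moreover obtain n where "length w = Suc n"
    using assms(2) by (cases w) auto
  ultimately have "w = replicate 0 c @ concat (replicate n (d # replicate 0 c)) @ d # replicate 0 c"
    by (metis replicate_length_same replicate_append_same append_Nil concat_replicate_single
        replicate_0 replicate_Suc)
  then show ?thesis
    unfolding uniform_gaps_def by blast
qed

section \<open>The exponent under injective morphisms\<close>

lemma wpow_length_le_if_not_uniform_gaps: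
  fixes h :: "'a \<Rightarrow> 'b list"
  assumes inj: "inj (morph h)" and "a \<noteq> b" and "set w \<subseteq> {a, b}" and "w \<noteq> []"
    and "\<not> uniform_gaps a b w" and "\<not> uniform_gaps b a w"
    and "v \<noteq> []" and hw: "morph h w = wpow v p"
  shows "p \<le> length w * length v"
proof (rule ccontr)
  assume long: "\<not> p \<le> length w * length v"
  define F where "F i = v ! (i mod length v)" for i
  have "has_period F (length v)"
    by (simp add: has_period_def F_def)
  then obtain q where lp: "least_period F q" and "q \<le> length v"
    using least_period_exists \<open>v \<noteq> []\<close> by blast
  have occ: "occurs_at F (morph h w) 0"
    using hw by (simp add: occurs_at_def F_def wpow_def)
  have "\<exists>c \<in> {a, b}. q \<le> length (h c)"
  proof (rule ccontr)
    assume "\<not> ?thesis"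
    then have "length (morph h w) \<le> length w * (q - 1)"
      using assms(3) by (intro length_morph_le) force
    also have "\<dots> \<le> length w * length v"
      using \<open>q \<le> length v\<close> by (intro mult_le_mono2) linarith
    finally show False
      using long hw by (simp add: wpow_def)
  qed
  then obtain c d where cd: "{c, d} = {a, b}" "c \<noteq> d" and "q \<le> length (h c)"
    using \<open>a \<noteq> b\<close> by (metis insert_commute insertE singletonD)
  have "equal_gaps c d w"
    by (rule inj_morph_equal_gaps[OF lp occ inj \<open>c \<noteq> d\<close> \<open>q \<le> length (h c)\<close>])
  then have "uniform_gaps c d w \<or> uniform_gaps d c w"
    using assms(3,4) cd(1) by (intro uniform_gaps_or_swapped_if_equal_gaps) simp_all
  then show False
    using assms(5,6) cd by (auto simp: doubleton_eq_iff)
qed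

lemma exp_I_le_length_if_not_uniform_gaps:
  assumes "a \<noteq> b" and "set w \<subseteq> {a, b}" and "w \<noteq> []"
    and "\<not> uniform_gaps a b w" and "\<not> uniform_gaps b a w"
  shows "exp_I (inj_morphs :: ('a \<Rightarrow> 'b list) set) w \<le> ereal (real (length w))"
  unfolding exp_I_def
proof (rule SUP_least)
  fix h :: "'a \<Rightarrow> 'b list"
  assume "h \<in> inj_morphs"
  then have inj: "inj (morph h)"
    by (simp add: inj_morphs_def)
  show "word_exp (morph h w) \<le> ereal (real (length w))"
    unfolding word_exp_def
  proof (rule Sup_least, clarify)
    fix v :: "'b list" and p
    assume "v \<noteq> []" and "morph h w = wpow v p"
    then have "p \<le> length w * length v"
      by (rule wpow_length_le_if_not_uniform_gaps[OF inj assms])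
    then have "real p \<le> real (length w) * real (length v)"
      by (metis of_nat_le_iff of_nat_mult)
    then show "ereal (real_of_rat (of_nat p / of_nat (length v))) \<le> ereal (real (length w))"
      using \<open>v \<noteq> []\<close> by (simp add: of_rat_divide divide_le_eq)
  qed
qed

lemma morph_uniform_gaps_word:
  assumes fb: "f b = [z0]"
    and fa: "f a = replicate j3 z0 @ z1 # replicate j2 z0 @ concat (replicate N t)
      @ replicate (j1 + j3) z0 @ z1 # replicate j1 z0"
    and t: "t = replicate (j1 + j3) z0 @ z1 # replicate j2 z0"
  shows "morph f (replicate j1 b @ concat (replicate k (a # replicate j2 b)) @ a # replicate j3 b)
    = concat (replicate ((N + 2) * k + (N + 1)) t)
      @ replicate (j1 + j3) z0 @ z1 # replicate (j1 + j3) z0"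
proof -
  have "replicate j1 z0 @ f a @ replicate j2 z0 = t @ concat (replicate N t) @ t @ replicate j1 z0"
    using replicate_append_commute[of j1 z0 j2] by (simp add: fa t replicate_add)
  also have "\<dots> = concat (replicate (N + 2) t) @ replicate j1 z0"
    by (simp flip: concat_replicate_append_self)
  finally have "replicate j1 z0 @ concat (replicate k (f a @ replicate j2 z0))
      = concat (replicate ((N + 2) * k) t) @ replicate j1 z0"
    using concat_replicate_rotate by (metis concat_replicate_mult mult.commute)
  then have "morph f (replicate j1 b @ concat (replicate k (a # replicate j2 b)) @ a # replicate j3 b)
      = concat (replicate ((N + 2) * k) t) @ replicate j1 z0 @ f a @ replicate j3 z0"
    using fb by (simp flip: append_assoc)
  also have "replicate j1 z0 @ f a @ replicate j3 z0
      = concat (replicate (N + 1) t) @ replicate (j1 + j3) z0 @ z1 # replicate (j1 + j3) z0"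
    by (simp add: fa t replicate_add)
  finally show ?thesis
    by (simp only: replicate_add concat_append append_assoc)
qed

lemma exp_I_ge_if_uniform_gaps:
  fixes a b :: "'a::finite" and z0 z1 :: 'b
  assumes "a \<noteq> b" and "z0 \<noteq> z1"
    and w: "w = replicate j1 b @ concat (replicate k (a # replicate j2 b)) @ a # replicate j3 b"
  shows "ereal (real N) \<le> exp_I (inj_morphs :: ('a \<Rightarrow> 'b list) set) w"
proof -
  define c where "c = j1 + j3"
  define t where "t = replicate c z0 @ z1 # replicate j2 z0"
  \<comment> \<open>chosen so that z0^j1 u z0^j2 = t^(N+2) z0^j1\<close>
  define u where "u = replicate j3 z0 @ z1 # replicate j2 z0 @ concat (replicate N t)
      @ replicate c z0 @ z1 # replicate j1 z0"
  have "\<exists>r. u = replicate j3 z0 @ z1 # replicate (j2 + c) z0 @ z1 # r"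
    by (cases N) (auto simp: u_def t_def replicate_add)
  then obtain f :: "'a \<Rightarrow> 'b list" where "inj (morph f)" and fa: "f a = u" and fb: "f b = [z0]"
    using inj_morph_with_marked_image[OF assms(1,2)] by metis
  define m where "m = (N + 2) * k + (N + 1)"
  have fw: "morph f w = concat (replicate m t) @ replicate c z0 @ z1 # replicate c z0"
    unfolding w m_def c_def
    by (rule morph_uniform_gaps_word[where f = f and b = b and t = t, OF fb])
      (simp_all add: fa u_def t_def c_def)
  have "morph f w @ replicate j2 z0 @ z1 # replicate j2 z0
      = concat (replicate m t) @ concat (replicate 2 t)"
    using replicate_append_commute[of c z0 j2] by (simp add: fw t_def numeral_2_eq_2)
  also have "\<dots> = concat (replicate (m + 2) t)"
    by (simp only: replicate_add concat_append)
  finally have "ereal (real N) \<le> word_exp (morph f w)"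
  proof (rule word_exp_ge_if_prefix_of_power)
    show "t \<noteq> []"
      by (simp add: t_def)
    have "N * length t \<le> m * length t"
      by (intro mult_le_mono1) (simp add: m_def)
    also have "\<dots> \<le> length (morph f w)"
      unfolding fw by simp
    finally show "N * length t \<le> length (morph f w)" .
  qed
  moreover have "word_exp (morph f w) \<le> exp_I (inj_morphs :: ('a \<Rightarrow> 'b list) set) w"
    unfolding exp_I_def using \<open>inj (morph f)\<close> by (intro SUP_upper) (simp add: inj_morphs_def)
  ultimately show ?thesis
    by (rule order_trans)
qed

lemma exp_I_infinite_if_uniform_gaps:
  fixes a b :: "'a::finite" and z0 z1 :: 'b
  assumes "a \<noteq> b" and "z0 \<noteq> z1" and "uniform_gaps a b w"
  shows "exp_I (inj_morphs :: ('a \<Rightarrow> 'b list) set) w = \<infinity>"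
proof (rule ereal_top)
  fix B :: real
  obtain k j1 j2 j3 where
    w: "w = replicate j1 b @ concat (replicate k (a # replicate j2 b)) @ a # replicate j3 b"
    using assms(3) unfolding uniform_gaps_def by blast
  have "ereal B \<le> ereal (real (nat \<lceil>B\<rceil>))"
    by (simp add: real_nat_ceiling_ge)
  also have "\<dots> \<le> exp_I (inj_morphs :: ('a \<Rightarrow> 'b list) set) w"
    by (rule exp_I_ge_if_uniform_gaps[OF assms(1,2) w])
  finally show "ereal B \<le> exp_I (inj_morphs :: ('a \<Rightarrow> 'b list) set) w" .
qed

theorem corollary10:
  fixes a b :: "'a::finite" and w :: "'a list"
  assumes "card (UNIV :: 'a set) \<ge> 2" and "card (UNIV :: 'b::finite set) \<ge> 2"
    and "a \<noteq> b"
    and "w \<noteq> []" and "set w \<subseteq> {a, b}"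
  shows "(exp_I (inj_morphs :: ('a \<Rightarrow> 'b list) set) w = \<infinity>
            \<longleftrightarrow> exp_I (inj_morphs :: ('a \<Rightarrow> 'b list) set) w > ereal (real (length w)))
       \<and> (exp_I (inj_morphs :: ('a \<Rightarrow> 'b list) set) w > ereal (real (length w))
            \<longleftrightarrow> (\<exists>k j1 j2 j3 :: nat.
                   w = replicate j1 b @ concat (replicate k (a # replicate j2 b)) @ a # replicate j3 b
                 \<or> w = replicate j1 a @ concat (replicate k (b # replicate j2 a)) @ b # replicate j3 a))"
proof -
  obtain z0 z1 :: 'b where "z0 \<noteq> z1"
    using assms(2) card_le_Suc0_iff_eq[of "UNIV :: 'b set"] by fastforce
  have shape: "(\<exists>k j1 j2 j3 :: nat.
                   w = replicate j1 b @ concat (replicate k (a # replicate j2 b)) @ a # replicate j3 b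
                 \<or> w = replicate j1 a @ concat (replicate k (b # replicate j2 a)) @ b # replicate j3 a)
      \<longleftrightarrow> uniform_gaps a b w \<or> uniform_gaps b a w"
    unfolding uniform_gaps_def by blast
  show ?thesis
  proof (cases "uniform_gaps a b w \<or> uniform_gaps b a w")
    case True
    then have "exp_I (inj_morphs :: ('a \<Rightarrow> 'b list) set) w = \<infinity>"
      using exp_I_infinite_if_uniform_gaps[OF assms(3) \<open>z0 \<noteq> z1\<close>]
        exp_I_infinite_if_uniform_gaps[OF assms(3)[symmetric] \<open>z0 \<noteq> z1\<close>] by blast
    then show ?thesis
      using True shape by simp
  next
    case False
    then have "exp_I (inj_morphs :: ('a \<Rightarrow> 'b list) set) w \<le> ereal (real (length w))"
      using exp_I_le_length_if_not_uniform_gaps[OF assms(3,5,4)] by blast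
    then show ?thesis
      using False shape by auto
  qed
qed

end
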